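(* For every $k\ge1$, $$\lim_{N\to\infty}\mathbb{E}[Z_{N,k}^2]=\sum_{(w_1,w_2)}\mathbb{E}\big[\bar T_{w_1}\bar T_{w_2}\big],$$ where the sum runs over a set of representatives of equivalence classes of weak CLT pairs $(w_1,w_2)$ with $w_1,w_2\in\mathcal V_k$ and $\mathrm{wt}((w_1,w_2))=k$. In particular the limit is $0$ when $k$ is even.
   Context: $\{\xi_{ij}\}_{1\le i\le j}$ are independent real random variables; $\{\xi_{ii}\}$ i.i.d. with mean zero and all moments finite; $\{\xi_{ij}\}_{i<j}$ i.i.d. with mean zero, $\mathbb{E}[\xi_{12}^2]=1$, all moments finite; $\xi_e=\xi_{\min(i,j),\max(i,j)}$ for $e=\{i,j\}$ (including $i=j$). A word is a finite sequence $w=(s_1,\dots,s_m)$ of positive integers; $\ell(w)=m$; $N$-word if all letters lie in $\{1,\dots,N\}$; closed if $s_1=s_m$; $\mathrm{supp}(w)$ its letter set; $E_w=\{\{s_i,s_{i+1}\}:1\le i\le m-1\}$ (undirected; self edge $\{u,u\}$); $N_e^w=\#\{i\le m-1:\{s_i,s_{i+1}\}=e\}$. For $a=(w_1,w_2)$: $\mathrm{wt}(a)=\#(\mathrm{supp}(w_1)\cup\mathrm{supp}(w_2))$, $E_a=E_{w_1}\cup E_{w_2}$, $N_e^a=N_e^{w_1}+N_e^{w_2}$; equivalence = a bijection of supports mapping one to the other letter by letter. Weak CLT pair: $N_e^a\ge2$ for all $e\in E_a$ and $E_{w_1}\cap E_{w_2}\ne\emptyset$. $\mathcal V_k$ = closed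 words of length $k+1$ with first letter $1$ having at least one self edge; $\mathcal V_k^{(N)}$ its $N$-words. $T_w=\prod_{e\in E_w}\xi_e^{N_e^w}$, $\bar T_w=T_w-\mathbb{E}T_w$, $Z_{N,k}=N^{-(k-1)/2}\sum_{w\in\mathcal V_k^{(N)}}\bar T_w$. *)

theory Defs
  imports "HOL-Probability.Probability"
begin

text \<open>An undirected edge \<open>{a,b}\<close> is represented by the normalized pair \<open>(min a b, max a b)\<close>;
  a self edge is a pair \<open>(u,u)\<close>.\<close>

definition mk_edge :: "nat \<Rightarrow> nat \<Rightarrow> nat \<times> nat" where
  "mk_edge a b = (min a b, max a b)"

definition word_edges :: "nat list \<Rightarrow> (nat \<times> nat) set" where
  "word_edges w = {mk_edge (w ! i) (w ! Suc i) | i. Suc i < length w}"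

definition edge_count :: "nat list \<Rightarrow> nat \<times> nat \<Rightarrow> nat" where
  "edge_count w e = card {i. Suc i < length w \<and> mk_edge (w ! i) (w ! Suc i) = e}"

definition closed_word :: "nat list \<Rightarrow> bool" where
  "closed_word w \<longleftrightarrow> w \<noteq> [] \<and> hd w = last w"

definition V_words :: "nat \<Rightarrow> nat list set" where
  "V_words k = {w. length w = k + 1 \<and> closed_word w \<and> hd w = 1 \<and> (\<forall>a\<in>set w. 1 \<le> a)
                  \<and> (\<exists>e\<in>word_edges w. fst e = snd e)}"

definition V_words_N :: "nat \<Rightarrow> nat \<Rightarrow> nat list set" where
  "V_words_N N k = {w \<in> V_words k. set w \<subseteq> {1..N}}"

text \<open>\<open>\<xi> i j\<close> for \<open>i \<le> j\<close> is the entry variable; \<open>\<xi>_e\<close> for a normalized edge e = (i,j) is \<open>\<xi> i j\<close>.\<close>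
definition T_word :: "(nat \<Rightarrow> nat \<Rightarrow> 'a \<Rightarrow> real) \<Rightarrow> nat list \<Rightarrow> 'a \<Rightarrow> real" where
  "T_word \<xi> w x = (\<Prod>e\<in>word_edges w. \<xi> (fst e) (snd e) x ^ edge_count w e)"

definition Tbar_word :: "'a measure \<Rightarrow> (nat \<Rightarrow> nat \<Rightarrow> 'a \<Rightarrow> real) \<Rightarrow> nat list \<Rightarrow> 'a \<Rightarrow> real" where
  "Tbar_word M \<xi> w x = T_word \<xi> w x - integral\<^sup>L M (T_word \<xi> w)"

definition Z_var :: "'a measure \<Rightarrow> (nat \<Rightarrow> nat \<Rightarrow> 'a \<Rightarrow> real) \<Rightarrow> nat \<Rightarrow> nat \<Rightarrow> 'a \<Rightarrow> real" where
  "Z_var M \<xi> N k x = real N powr (- (real k - 1) / 2) * (\<Sum>w\<in>V_words_N N k. Tbar_word M \<xi> w x)"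

definition pair_wt :: "nat list \<times> nat list \<Rightarrow> nat" where
  "pair_wt a = card (set (fst a) \<union> set (snd a))"

definition pair_edges :: "nat list \<times> nat list \<Rightarrow> (nat \<times> nat) set" where
  "pair_edges a = word_edges (fst a) \<union> word_edges (snd a)"

definition pair_count :: "nat list \<times> nat list \<Rightarrow> nat \<times> nat \<Rightarrow> nat" where
  "pair_count a e = edge_count (fst a) e + edge_count (snd a) e"

definition weak_CLT_pair :: "nat list \<times> nat list \<Rightarrow> bool" where
  "weak_CLT_pair a \<longleftrightarrow> (\<forall>e\<in>pair_edges a. pair_count a e \<ge> 2)
      \<and> word_edges (fst a) \<inter> word_edges (snd a) \<noteq> {}"

definition pair_equiv :: "nat list \<times> nat list \<Rightarrow> nat list \<times> nat list \<Rightarrow> bool" where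
  "pair_equiv a b \<longleftrightarrow> (\<exists>\<phi>. bij_betw \<phi> (set (fst a) \<union> set (snd a)) (set (fst b) \<union> set (snd b))
      \<and> map \<phi> (fst a) = fst b \<and> map \<phi> (snd a) = snd b)"

definition CLT_pairs :: "nat \<Rightarrow> (nat list \<times> nat list) set" where
  "CLT_pairs k = {a. fst a \<in> V_words k \<and> snd a \<in> V_words k \<and> weak_CLT_pair a \<and> pair_wt a = k}"

definition CLT_pair_rel :: "nat \<Rightarrow> ((nat list \<times> nat list) \<times> (nat list \<times> nat list)) set" where
  "CLT_pair_rel k = {(a, b). a \<in> CLT_pairs k \<and> b \<in> CLT_pairs k \<and> pair_equiv a b}"

definition limit_sum :: "'a measure \<Rightarrow> (nat \<Rightarrow> nat \<Rightarrow> 'a \<Rightarrow> real) \<Rightarrow> nat \<Rightarrow> real" where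
  "limit_sum M \<xi> k = (\<Sum>C\<in>CLT_pairs k // CLT_pair_rel k.
      (let a = (SOME a. a \<in> C) in
        integral\<^sup>L M (\<lambda>x. Tbar_word M \<xi> (fst a) x * Tbar_word M \<xi> (snd a) x)))"

end

theory Submission
  imports Defs
begin

(* Expanding the square, E[Z_{N,k}^2] = N^{-(k-1)} * sum over pairs (w1, w2) of words of V_k over
   {1..N} of Cov(T_w1, T_w2).  By independence this covariance is a product of moments indexed
   by the edges of the pair, so it only depends on the equivalence class of the pair (pair_cov),
   and it vanishes unless the pair is a weak CLT pair.  Each class has a canonical representative
   (letters renamed 1, 2, ... in order of first occurrence), and the class of a canonical pair of
   weight m contains (N-1)(N-2)...(N-m+1) ~ N^(m-1) pairs over {1..N}, the letter 1 being fixed.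

   The combinatorial heart is the weight bound: the two closed walks of a weak CLT pair join into
   one walk whose graph has at most k edges, one of them a loop, and as a connected graph at most
   one vertex more than non-loop edges; hence weight <= k.  Equality forces a tree plus a single
   loop, so the second word makes k - 1 moving steps along a properly 2-coloured tree, which is
   only possible when k - 1 is even.  Only the classes of weight k survive the normalisation,
   which yields the limit; for even k there are none.

   The variance
   normalisation of the off-diagonal entries plays no role in the argument. *)

lemma mk_edge_sym: "mk_edge a b = mk_edge b a"
  by (auto simp: mk_edge_def)

lemma mk_edge_fst_snd [simp]: "fst (mk_edge a b) = min a b" "snd (mk_edge a b) = max a b"
  by (auto simp: mk_edge_def)

lemma mk_edge_eq_iff: "mk_edge a b = mk_edge c d \<longleftrightarrow> (a = c \<and> b = d) \<or> (a = d \<and> b = c)"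
  by (auto simp: mk_edge_def min_def max_def)

lemma word_edges_image: "word_edges w = (\<lambda>i. mk_edge (w ! i) (w ! Suc i)) ` {i. Suc i < length w}"
  by (auto simp: word_edges_def)

lemma finite_steps [simp]: "finite {i. Suc i < length w}" "finite {i. Suc i < length w \<and> P i}"
  by (rule finite_subset[of _ "{..<length w}"], auto)+

lemma finite_word_edges [simp]: "finite (word_edges w)"
  unfolding word_edges_image by simp

lemma word_edge_ends: "e \<in> word_edges w \<Longrightarrow> fst e \<in> set w \<and> snd e \<in> set w"
  by (auto simp: word_edges_def min_def max_def)

lemma word_edge_normal: "e \<in> word_edges w \<Longrightarrow> e = mk_edge (fst e) (snd e)"
  by (auto simp: word_edges_def mk_edge_def)

lemma edge_count_pos: "e \<in> word_edges w \<Longrightarrow> 1 \<le> edge_count w e"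
  unfolding edge_count_def word_edges_def by (auto simp: Suc_le_eq card_gt_0_iff)

lemma edge_count_eq_0: "e \<notin> word_edges w \<Longrightarrow> edge_count w e = 0"
  unfolding edge_count_def word_edges_def by auto

text \<open>Every step of a word traverses exactly one edge, so the edge counts add up to the
  number of steps.\<close>
lemma sum_edge_count: "(\<Sum>e\<in>word_edges w. edge_count w e) = length w - 1"
proof -
  have "(\<Sum>e\<in>word_edges w. edge_count w e)
      = (\<Sum>e\<in>word_edges w. \<Sum>i\<in>{i. i \<in> {i. Suc i < length w} \<and> mk_edge (w!i) (w!Suc i) = e}. (1::nat))"
    unfolding edge_count_def by simp
  also have "\<dots> = (\<Sum>i\<in>{i. Suc i < length w}. 1)"
    by (rule sum.group) (auto simp: word_edges_image)
  also have "{i. Suc i < length w} = {..<length w - 1}"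
    by auto
  finally show ?thesis
    by simp
qed

lemma sum_pair_count:
  "(\<Sum>e\<in>pair_edges a. pair_count a e) = (length (fst a) - 1) + (length (snd a) - 1)"
proof -
  have "(\<Sum>e\<in>pair_edges a. edge_count w e) = (\<Sum>e\<in>word_edges w. edge_count w e)"
    if "w = fst a \<or> w = snd a" for w
    using that unfolding pair_edges_def
    by (intro sum.mono_neutral_right) (auto simp: edge_count_eq_0)
  then show ?thesis
    by (simp add: pair_count_def sum.distrib sum_edge_count)
qed

definition edge_map :: "(nat \<Rightarrow> nat) \<Rightarrow> nat \<times> nat \<Rightarrow> nat \<times> nat" where
  "edge_map \<phi> e = mk_edge (\<phi> (fst e)) (\<phi> (snd e))"

lemma edge_map_mk_edge: "edge_map \<phi> (mk_edge a b) = mk_edge (\<phi> a) (\<phi> b)"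
  by (cases "a \<le> b") (auto simp: edge_map_def mk_edge_def min_def max_def)

lemma word_edges_map: "word_edges (map \<phi> w) = edge_map \<phi> ` word_edges w"
  unfolding word_edges_image by (auto simp: edge_map_mk_edge image_image)

lemma edge_map_inj:
  assumes "inj_on \<phi> D" "fst e \<in> D" "snd e \<in> D" "fst e' \<in> D" "snd e' \<in> D"
    and "e = mk_edge (fst e) (snd e)" "e' = mk_edge (fst e') (snd e')"
    and "edge_map \<phi> e = edge_map \<phi> e'"
  shows "e = e'"
proof -
  have "(\<phi> (fst e) = \<phi> (fst e') \<and> \<phi> (snd e) = \<phi> (snd e'))
      \<or> (\<phi> (fst e) = \<phi> (snd e') \<and> \<phi> (snd e) = \<phi> (fst e'))"
    using assms(8) by (simp add: edge_map_def mk_edge_eq_iff)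
  then have "(fst e = fst e' \<and> snd e = snd e') \<or> (fst e = snd e' \<and> snd e = fst e')"
    using assms(1-5) by (auto dest: inj_onD)
  then show ?thesis
    using assms(6,7) by (metis mk_edge_sym)
qed

lemma edge_map_loop:
  assumes "inj_on \<phi> D" "fst e \<in> D" "snd e \<in> D"
  shows "fst (edge_map \<phi> e) = snd (edge_map \<phi> e) \<longleftrightarrow> fst e = snd e"
  using assms by (auto simp: edge_map_def min_def max_def split: if_splits dest: inj_onD)

lemma inj_on_edge_map:
  assumes "inj_on \<phi> D" "set w \<subseteq> D" "set v \<subseteq> D"
  shows "inj_on (edge_map \<phi>) (word_edges w \<union> word_edges v)"
proof (rule inj_onI)
  fix e e' assume e: "e \<in> word_edges w \<union> word_edges v" and e': "e' \<in> word_edges w \<union> word_edges v"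
    and eq: "edge_map \<phi> e = edge_map \<phi> e'"
  have "fst e \<in> D \<and> snd e \<in> D \<and> e = mk_edge (fst e) (snd e)"
    if "e \<in> word_edges w \<union> word_edges v" for e
    using that assms(2,3) word_edge_ends[of e] word_edge_normal[of e] by blast
  then show "e = e'"
    using e e' by (intro edge_map_inj[OF assms(1) _ _ _ _ _ _ eq]) simp_all
qed

lemma edge_count_map:
  assumes "inj_on \<phi> D" "set w \<subseteq> D" "fst e \<in> D" "snd e \<in> D" "e = mk_edge (fst e) (snd e)"
  shows "edge_count (map \<phi> w) (edge_map \<phi> e) = edge_count w e"
proof -
  have "{i. Suc i < length (map \<phi> w) \<and> mk_edge (map \<phi> w ! i) (map \<phi> w ! Suc i) = edge_map \<phi> e}
      = {i. Suc i < length w \<and> mk_edge (w ! i) (w ! Suc i) = e}"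
  proof (intro Collect_cong conj_cong refl)
    fix i assume i: "Suc i < length w"
    have ends: "w ! i \<in> D" "w ! Suc i \<in> D"
      using i assms(2) by (auto intro!: nth_mem)
    have "mk_edge (map \<phi> w ! i) (map \<phi> w ! Suc i) = edge_map \<phi> (mk_edge (w ! i) (w ! Suc i))"
      using i by (simp add: edge_map_mk_edge)
    moreover have "mk_edge (w ! i) (w ! Suc i) = e"
      if "edge_map \<phi> (mk_edge (w ! i) (w ! Suc i)) = edge_map \<phi> e"
      by (rule edge_map_inj[OF assms(1) _ _ assms(3,4) _ assms(5) that])
         (use ends in \<open>auto simp: mk_edge_def min_def max_def\<close>)
    ultimately show "(mk_edge (map \<phi> w ! i) (map \<phi> w ! Suc i) = edge_map \<phi> e)
        = (mk_edge (w ! i) (w ! Suc i) = e)"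
      by auto
  qed simp
  then show ?thesis
    by (simp add: edge_count_def)
qed

definition pair_supp :: "nat list \<times> nat list \<Rightarrow> nat set" where
  "pair_supp a = set (fst a) \<union> set (snd a)"

definition relabel :: "(nat \<Rightarrow> nat) \<Rightarrow> nat list \<times> nat list \<Rightarrow> nat list \<times> nat list" where
  "relabel \<phi> a = (map \<phi> (fst a), map \<phi> (snd a))"

lemma pair_wt_supp: "pair_wt a = card (pair_supp a)"
  by (simp add: pair_wt_def pair_supp_def)

lemma pair_supp_relabel: "pair_supp (relabel \<phi> a) = \<phi> ` pair_supp a"
  by (auto simp: pair_supp_def relabel_def)

lemma relabel_comp: "relabel f (relabel g a) = relabel (\<lambda>x. f (g x)) a"
  by (simp add: relabel_def)

lemma relabel_cong: "(\<And>x. x \<in> pair_supp a \<Longrightarrow> f x = g x) \<Longrightarrow> relabel f a = relabel g a"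
  by (auto simp: relabel_def pair_supp_def)

lemma relabel_id: "(\<And>x. x \<in> pair_supp a \<Longrightarrow> f x = x) \<Longrightarrow> relabel f a = a"
  by (cases a) (auto simp: relabel_def pair_supp_def intro: map_idI)

lemma pair_edge_ends:
  "e \<in> pair_edges a \<Longrightarrow> fst e \<in> pair_supp a \<and> snd e \<in> pair_supp a \<and> e = mk_edge (fst e) (snd e)"
  using word_edge_ends[of e] word_edge_normal[of e] by (auto simp: pair_edges_def pair_supp_def)

lemma pair_edges_relabel: "pair_edges (relabel \<phi> a) = edge_map \<phi> ` pair_edges a"
  by (auto simp: pair_edges_def relabel_def word_edges_map)

lemma inj_on_edge_map_pair:
  "inj_on \<phi> (pair_supp a) \<Longrightarrow> inj_on (edge_map \<phi>) (pair_edges a)"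
  unfolding pair_edges_def using inj_on_edge_map by (auto simp: pair_supp_def)

lemma pair_count_relabel:
  assumes "inj_on \<phi> (pair_supp a)" "e \<in> pair_edges a"
  shows "pair_count (relabel \<phi> a) (edge_map \<phi> e) = pair_count a e"
  using pair_edge_ends[OF assms(2)]
    edge_count_map[OF assms(1), of "fst a" e] edge_count_map[OF assms(1), of "snd a" e]
  by (simp add: pair_count_def relabel_def pair_supp_def)

lemma pair_wt_relabel: "inj_on \<phi> (pair_supp a) \<Longrightarrow> pair_wt (relabel \<phi> a) = pair_wt a"
  unfolding pair_wt_supp pair_supp_relabel by (rule card_image)

lemma weak_CLT_pair_relabel:
  assumes "inj_on \<phi> (pair_supp a)"
  shows "weak_CLT_pair (relabel \<phi> a) \<longleftrightarrow> weak_CLT_pair a"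
proof -
  have "word_edges (fst (relabel \<phi> a)) \<inter> word_edges (snd (relabel \<phi> a))
      = edge_map \<phi> ` (word_edges (fst a) \<inter> word_edges (snd a))"
    unfolding relabel_def fst_conv snd_conv word_edges_map
    by (rule inj_on_image_Int[symmetric, OF inj_on_edge_map_pair[OF assms]])
       (auto simp: pair_edges_def)
  then show ?thesis
    unfolding weak_CLT_pair_def pair_edges_relabel using pair_count_relabel[OF assms] by auto
qed

text \<open>Moment data \<open>\<mu> e n\<close> (the n-th moment of the entry on edge e) that, as for the
  entries of the matrix, depends on e only through whether e is a loop.\<close>
definition loop_determined :: "(nat \<times> nat \<Rightarrow> nat \<Rightarrow> real) \<Rightarrow> bool" where
  "loop_determined \<mu> \<longleftrightarrow> (\<forall>e e' n. (fst e = snd e \<longleftrightarrow> fst e' = snd e') \<longrightarrow> \<mu> e n = \<mu> e' n)"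

text \<open>In terms of moments: \<open>word_moment \<mu> w\<close> is \<open>E[T_w]\<close>, and \<open>pair_cov \<mu> a\<close> is the
  covariance \<open>E[T_w1 T_w2] - E[T_w1] E[T_w2]\<close> of the pair \<open>a = (w1, w2)\<close>.\<close>
definition word_moment :: "(nat \<times> nat \<Rightarrow> nat \<Rightarrow> real) \<Rightarrow> nat list \<Rightarrow> real" where
  "word_moment \<mu> w = (\<Prod>e\<in>word_edges w. \<mu> e (edge_count w e))"

definition pair_cov :: "(nat \<times> nat \<Rightarrow> nat \<Rightarrow> real) \<Rightarrow> nat list \<times> nat list \<Rightarrow> real" where
  "pair_cov \<mu> a = (\<Prod>e\<in>pair_edges a. \<mu> e (pair_count a e))
      - word_moment \<mu> (fst a) * word_moment \<mu> (snd a)"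

lemma prod_moments_relabel:
  assumes "inj_on \<phi> D" "\<And>e. e \<in> E \<Longrightarrow> fst e \<in> D \<and> snd e \<in> D" "loop_determined \<mu>"
    and "inj_on (edge_map \<phi>) E" "\<And>e. e \<in> E \<Longrightarrow> c' (edge_map \<phi> e) = c e"
  shows "(\<Prod>e\<in>edge_map \<phi> ` E. \<mu> e (c' e)) = (\<Prod>e\<in>E. \<mu> e (c e))"
proof -
  have "(\<Prod>e\<in>edge_map \<phi> ` E. \<mu> e (c' e)) = (\<Prod>e\<in>E. \<mu> (edge_map \<phi> e) (c' (edge_map \<phi> e)))"
    by (rule prod.reindex[OF assms(4), unfolded comp_def])
  also have "\<dots> = (\<Prod>e\<in>E. \<mu> e (c e))"
  proof (rule prod.cong[OF refl])
    fix e assume e: "e \<in> E"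
    have "\<mu> (edge_map \<phi> e) n = \<mu> e n" for n
      using assms(3) edge_map_loop[OF assms(1)] assms(2)[OF e] unfolding loop_determined_def by blast
    then show "\<mu> (edge_map \<phi> e) (c' (edge_map \<phi> e)) = \<mu> e (c e)"
      using assms(5)[OF e] by simp
  qed
  finally show ?thesis .
qed

lemma word_moment_map:
  assumes "inj_on \<phi> D" "set w \<subseteq> D" "loop_determined \<mu>"
  shows "word_moment \<mu> (map \<phi> w) = word_moment \<mu> w"
  unfolding word_moment_def word_edges_map
proof (rule prod_moments_relabel[OF assms(1) _ assms(3)])
  show "inj_on (edge_map \<phi>) (word_edges w)"
    using inj_on_edge_map[OF assms(1,2,2)] by simp
  show "fst e \<in> D \<and> snd e \<in> D" if "e \<in> word_edges w" for e
    using that assms(2) word_edge_ends by blast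
  show "edge_count (map \<phi> w) (edge_map \<phi> e) = edge_count w e" if "e \<in> word_edges w" for e
    using that assms(2) word_edge_ends[of e w] word_edge_normal[of e w]
    by (intro edge_count_map[OF assms(1)]) auto
qed

lemma pair_cov_relabel:
  assumes "inj_on \<phi> (pair_supp a)" "loop_determined \<mu>"
  shows "pair_cov \<mu> (relabel \<phi> a) = pair_cov \<mu> a"
proof -
  have "(\<Prod>e\<in>pair_edges (relabel \<phi> a). \<mu> e (pair_count (relabel \<phi> a) e))
      = (\<Prod>e\<in>pair_edges a. \<mu> e (pair_count a e))"
    unfolding pair_edges_relabel
    by (rule prod_moments_relabel[OF assms(1) _ assms(2) inj_on_edge_map_pair[OF assms(1)]])
       (simp_all add: pair_edge_ends pair_count_relabel[OF assms(1)])
  moreover have "word_moment \<mu> (map \<phi> w) = word_moment \<mu> w" if "w = fst a \<or> w = snd a" for w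
    using that by (intro word_moment_map[OF assms(1) _ assms(2)]) (auto simp: pair_supp_def)
  ultimately show ?thesis
    by (simp add: pair_cov_def relabel_def)
qed

lemma word_moment_eq_0:
  assumes "\<And>e. \<mu> e 1 = 0" "e \<in> word_edges w" "edge_count w e = 1"
  shows "word_moment \<mu> w = 0"
  unfolding word_moment_def using assms by (intro prod_zero bexI[OF _ assms(2)]) auto

lemma pair_moment_disjoint:
  assumes "word_edges (fst a) \<inter> word_edges (snd a) = {}"
  shows "(\<Prod>e\<in>pair_edges a. \<mu> e (pair_count a e)) = word_moment \<mu> (fst a) * word_moment \<mu> (snd a)"
proof -
  have "pair_count a e = edge_count w e" if "w = fst a \<or> w = snd a" "e \<in> word_edges w" for w e
    using that assms by (auto simp: pair_count_def intro!: edge_count_eq_0)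
  then have "(\<Prod>e\<in>word_edges w. \<mu> e (pair_count a e)) = word_moment \<mu> w"
    if "w = fst a \<or> w = snd a" for w
    unfolding word_moment_def using that by (intro prod.cong) auto
  then show ?thesis
    unfolding pair_edges_def using assms by (simp add: prod.union_disjoint)
qed

text \<open>Only weak CLT pairs contribute: an edge traversed once by the pair kills both terms,
  and edge-disjoint words are uncorrelated.\<close>
lemma pair_cov_eq_0:
  assumes mean_zero: "\<And>e. \<mu> e 1 = 0" and not_weak: "\<not> weak_CLT_pair a"
  shows "pair_cov \<mu> a = 0"
proof (cases "\<exists>e\<in>pair_edges a. pair_count a e < 2")
  case True
  then obtain e where e: "e \<in> pair_edges a" "pair_count a e < 2"
    by blast
  have count: "pair_count a e = 1"
    using e edge_count_pos[of e "fst a"] edge_count_pos[of e "snd a"]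
    by (auto simp: pair_edges_def pair_count_def)
  have "(\<Prod>e\<in>pair_edges a. \<mu> e (pair_count a e)) = 0"
    using e(1) count mean_zero by (intro prod_zero bexI[OF _ e(1)]) (auto simp: pair_edges_def)
  moreover obtain w where "w = fst a \<or> w = snd a" "e \<in> word_edges w" "edge_count w e = 1"
    using e(1) count edge_count_pos[of e] by (force simp: pair_edges_def pair_count_def)
  then have "word_moment \<mu> (fst a) = 0 \<or> word_moment \<mu> (snd a) = 0"
    using word_moment_eq_0[of \<mu> e w, OF mean_zero] by auto
  ultimately show ?thesis
    by (auto simp: pair_cov_def)
next
  case False
  then have "word_edges (fst a) \<inter> word_edges (snd a) = {}"
    using not_weak by (auto simp: weak_CLT_pair_def not_less)
  then show ?thesis
    by (simp add: pair_cov_def pair_moment_disjoint)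
qed

lemma word_edges_single [simp]: "word_edges [x] = {}"
  by (simp add: word_edges_def)

lemma word_edges_Cons:
  assumes "ys \<noteq> []"
  shows "word_edges (x # ys) = insert (mk_edge x (hd ys)) (word_edges ys)"
proof (rule set_eqI)
  fix e
  have "(\<exists>i. e = mk_edge ((x # ys) ! i) ((x # ys) ! Suc i) \<and> Suc i < Suc (length ys))
      \<longleftrightarrow> e = mk_edge x (hd ys) \<or> (\<exists>j. e = mk_edge (ys ! j) (ys ! Suc j) \<and> Suc j < length ys)"
    (is "?l \<longleftrightarrow> ?r")
  proof
    assume ?l
    then obtain i where "e = mk_edge ((x # ys) ! i) ((x # ys) ! Suc i)" "Suc i < Suc (length ys)"
      by blast
    then show ?r
      using assms by (cases i) (auto simp: hd_conv_nth)
  next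
    assume ?r
    then show ?l
    proof
      assume "e = mk_edge x (hd ys)"
      then show ?l
        using assms by (intro exI[of _ 0]) (auto simp: hd_conv_nth)
    next
      assume "\<exists>j. e = mk_edge (ys ! j) (ys ! Suc j) \<and> Suc j < length ys"
      then obtain j where "e = mk_edge (ys ! j) (ys ! Suc j)" "Suc j < length ys"
        by blast
      then show ?l
        by (intro exI[of _ "Suc j"]) auto
    qed
  qed
  then show "e \<in> word_edges (x # ys) \<longleftrightarrow> e \<in> insert (mk_edge x (hd ys)) (word_edges ys)"
    by (simp add: word_edges_def)
qed

lemma word_edges_append_tl:
  assumes "xs \<noteq> []" "ys \<noteq> []" "hd ys = last xs"
  shows "word_edges (xs @ tl ys) = word_edges xs \<union> word_edges ys"
  using assms(1,3)
proof (induction xs rule: list_nonempty_induct)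
  case (single x)
  then have "[x] @ tl ys = ys"
    using assms(2) by (cases ys) auto
  then show ?case
    by simp
next
  case (cons x xs)
  have "xs @ tl ys \<noteq> []" "hd (xs @ tl ys) = hd xs"
    using cons.hyps by auto
  then show ?case
    using cons by (simp add: word_edges_Cons)
qed

lemma word_edges_snoc:
  assumes "xs \<noteq> []"
  shows "word_edges (xs @ [x]) = insert (mk_edge (last xs) x) (word_edges xs)"
  using word_edges_append_tl[OF assms, of "[last xs, x]"] by (simp add: word_edges_Cons)

definition nonloop_edges :: "nat list \<Rightarrow> (nat \<times> nat) set" where
  "nonloop_edges w = {e \<in> word_edges w. fst e \<noteq> snd e}"

definition moving_steps :: "nat list \<Rightarrow> nat set" where
  "moving_steps w = {i. Suc i < length w \<and> w ! i \<noteq> w ! Suc i}"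

lemma finite_nonloop_edges [simp]: "finite (nonloop_edges w)"
  by (simp add: nonloop_edges_def)

lemma nonloop_edge_ends: "e \<in> nonloop_edges w \<Longrightarrow> fst e \<in> set w \<and> snd e \<in> set w"
  by (auto simp: nonloop_edges_def dest: word_edge_ends)

lemma nonloop_edges_snoc:
  assumes "xs \<noteq> []"
  shows "nonloop_edges (xs @ [x]) = nonloop_edges xs \<union> (if last xs \<noteq> x then {mk_edge (last xs) x} else {})"
  using assms unfolding nonloop_edges_def word_edges_snoc[OF assms]
  by (auto simp: min_def max_def split: if_splits)

lemma walk_snoc_old:
  assumes "xs \<noteq> []" "x \<in> set xs"
  shows "set (xs @ [x]) = set xs" "nonloop_edges xs \<subseteq> nonloop_edges (xs @ [x])"
  using assms nonloop_edges_snoc[OF assms(1)] by auto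

lemma walk_snoc_new:
  assumes "xs \<noteq> []" "x \<notin> set xs"
  shows "card (set (xs @ [x])) = Suc (card (set xs))"
    and "nonloop_edges (xs @ [x]) = insert (mk_edge (last xs) x) (nonloop_edges xs)"
    and "mk_edge (last xs) x \<notin> nonloop_edges xs"
proof -
  have "last xs \<noteq> x"
    using assms by auto
  then show "nonloop_edges (xs @ [x]) = insert (mk_edge (last xs) x) (nonloop_edges xs)"
    using nonloop_edges_snoc[OF assms(1)] by auto
  show "mk_edge (last xs) x \<notin> nonloop_edges xs"
    using assms(2) nonloop_edge_ends[of "mk_edge (last xs) x" xs]
    by (auto simp: min_def max_def split: if_splits)
  show "card (set (xs @ [x])) = Suc (card (set xs))"
    using assms(2) by simp
qed

text \<open>The graph traced by a walk is connected, so it has at most one vertex more than it has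
  edges.\<close>
lemma walk_vertices_le:
  "w \<noteq> [] \<Longrightarrow> card (set w) \<le> Suc (card (nonloop_edges w))"
proof (induction w rule: rev_induct)
  case (snoc x xs)
  show ?case
  proof (cases "xs = []")
    case True
    then show ?thesis
      by (simp add: nonloop_edges_def)
  next
    case False
    show ?thesis
    proof (cases "x \<in> set xs")
      case True
      then show ?thesis
        using snoc.IH[OF False] walk_snoc_old[OF False True]
          card_mono[OF finite_nonloop_edges, of "nonloop_edges xs" "xs @ [x]"] by simp
    next
      case new: False
      then show ?thesis
        using snoc.IH[OF False] walk_snoc_new[OF False new] by simp
    qed
  qed
qed simp

lemma colouring_add_leaf:
  fixes c :: "nat \<Rightarrow> bool"
  assumes proper: "\<forall>e\<in>E. c (fst e) \<noteq> c (snd e)" and "l \<noteq> x" and fresh: "\<forall>e\<in>E. fst e \<noteq> x \<and> snd e \<noteq> x"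
  shows "\<forall>e\<in>insert (mk_edge l x) E. (c(x := \<not> c l)) (fst e) \<noteq> (c(x := \<not> c l)) (snd e)"
  using assms by (auto simp: min_def max_def)

text \<open>In the extremal case the traced graph is a tree, hence admits a proper 2-colouring.\<close>
lemma tree_walk_colouring:
  "w \<noteq> [] \<Longrightarrow> card (set w) = Suc (card (nonloop_edges w))
    \<Longrightarrow> \<exists>c :: nat \<Rightarrow> bool. \<forall>e\<in>nonloop_edges w. c (fst e) \<noteq> c (snd e)"
proof (induction w rule: rev_induct)
  case (snoc x xs)
  show ?case
  proof (cases "xs = []")
    case True
    then show ?thesis
      by (simp add: nonloop_edges_def)
  next
    case ne: False
    show ?thesis
    proof (cases "x \<in> set xs")
      case True
      note old = walk_snoc_old[OF ne True]
      have "card (nonloop_edges (xs @ [x])) \<le> card (nonloop_edges xs)"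
        using walk_vertices_le[OF ne] snoc.prems(2) old(1) by simp
      then have "nonloop_edges xs = nonloop_edges (xs @ [x])"
        using old(2) card_mono[OF finite_nonloop_edges old(2)] by (intro card_subset_eq) auto
      then show ?thesis
        using snoc.IH[OF ne] snoc.prems(2) old(1) by simp
    next
      case False
      note new = walk_snoc_new[OF ne False]
      obtain c :: "nat \<Rightarrow> bool" where "\<forall>e\<in>nonloop_edges xs. c (fst e) \<noteq> c (snd e)"
        using snoc.IH[OF ne] snoc.prems(2) new by auto
      moreover have "last xs \<noteq> x"
        using ne False last_in_set by blast
      moreover have "\<forall>e\<in>nonloop_edges xs. fst e \<noteq> x \<and> snd e \<noteq> x"
        using nonloop_edge_ends False by blast
      ultimately show ?thesis
        unfolding new(2) by (blast dest: colouring_add_leaf)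
    qed
  qed
qed simp

lemma moving_steps_snoc:
  assumes "xs \<noteq> []"
  shows "moving_steps (xs @ [x]) = moving_steps xs \<union> (if last xs \<noteq> x then {length xs - 1} else {})"
proof (rule set_eqI)
  fix i
  have n: "0 < length xs"
    using assms by simp
  show "i \<in> moving_steps (xs @ [x]) \<longleftrightarrow> i \<in> moving_steps xs \<union> (if last xs \<noteq> x then {length xs - 1} else {})"
  proof (cases "Suc i < length xs")
    case True
    then show ?thesis
      by (auto simp: moving_steps_def nth_append)
  next
    case False
    show ?thesis
    proof (cases "i = length xs - 1")
      case True
      then have "(xs @ [x]) ! i = last xs" "(xs @ [x]) ! Suc i = x" "Suc i < length (xs @ [x])"
        using n by (auto simp: nth_append last_conv_nth)
      then show ?thesis
        using True by (auto simp: moving_steps_def)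
    next
      case not_last: False
      then show ?thesis
        using False n by (auto simp: moving_steps_def)
    qed
  qed
qed

lemma walk_colour_parity:
  assumes "w \<noteq> []" "\<forall>e\<in>nonloop_edges w. c (fst e) \<noteq> c (snd e)"
  shows "c (last w) = (c (hd w) \<longleftrightarrow> even (card (moving_steps w)))"
  using assms
proof (induction w rule: rev_induct)
  case (snoc x xs)
  show ?case
  proof (cases "xs = []")
    case True
    then show ?thesis
      by (simp add: moving_steps_def)
  next
    case ne: False
    have IH: "c (last xs) = (c (hd xs) \<longleftrightarrow> even (card (moving_steps xs)))"
      using snoc.IH[OF ne] snoc.prems(2) nonloop_edges_snoc[OF ne] by blast
    show ?thesis
    proof (cases "last xs = x")
      case True
      then show ?thesis
        using IH ne by (simp add: moving_steps_snoc)
    next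
      case False
      have "length xs - 1 \<notin> moving_steps xs" "finite (moving_steps xs)"
        by (auto simp: moving_steps_def)
      then have "card (moving_steps (xs @ [x])) = Suc (card (moving_steps xs))"
        using False ne by (simp add: moving_steps_snoc)
      moreover have "c (last xs) \<noteq> c x"
        using snoc.prems(2) nonloop_edges_snoc[OF ne] False
        by (auto simp: min_def max_def split: if_splits)
      ultimately show ?thesis
        using IH ne by auto
    qed
  qed
qed simp

lemma moving_steps_card:
  "card (moving_steps w) + card {i. Suc i < length w \<and> w ! i = w ! Suc i} = length w - 1"
proof -
  have "card (moving_steps w \<union> {i. Suc i < length w \<and> w ! i = w ! Suc i})
      = card (moving_steps w) + card {i. Suc i < length w \<and> w ! i = w ! Suc i}"
    by (rule card_Un_disjoint) (auto simp: moving_steps_def)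
  moreover have "moving_steps w \<union> {i. Suc i < length w \<and> w ! i = w ! Suc i} = {..<length w - 1}"
    by (auto simp: moving_steps_def)
  ultimately show ?thesis
    by simp
qed

lemma single_loop_step:
  assumes "fst s = snd s" "edge_count w s = 1"
    and "\<And>e. e \<in> word_edges w \<Longrightarrow> fst e = snd e \<Longrightarrow> e = s"
  shows "Suc (card (moving_steps w)) = length w - 1"
proof -
  have "{i. Suc i < length w \<and> w ! i = w ! Suc i} = {i. Suc i < length w \<and> mk_edge (w ! i) (w ! Suc i) = s}"
  proof (intro Collect_cong conj_cong refl iffI)
    fix i assume "Suc i < length w" "w ! i = w ! Suc i"
    moreover from this have "mk_edge (w ! i) (w ! Suc i) \<in> word_edges w"
      unfolding word_edges_image by blast
    ultimately show "mk_edge (w ! i) (w ! Suc i) = s"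
      by (intro assms(3)) auto
  next
    fix i assume "mk_edge (w ! i) (w ! Suc i) = s"
    then show "w ! i = w ! Suc i"
      using assms(1) by (auto simp: min_def max_def split: if_splits)
  qed
  then show ?thesis
    using moving_steps_card[of w] assms(2) by (simp add: edge_count_def)
qed

lemma V_wordsD:
  assumes "w \<in> V_words k"
  shows "w \<noteq> []" "hd w = 1" "last w = 1" "length w = k + 1" "\<exists>s\<in>word_edges w. fst s = snd s"
  using assms by (auto simp: V_words_def closed_word_def)

definition V_pairs :: "nat \<Rightarrow> (nat list \<times> nat list) set" where
  "V_pairs k = {a. fst a \<in> V_words k \<and> snd a \<in> V_words k}"

text \<open>Both words of a pair in \<open>V_pairs k\<close> are closed walks through 1, so they join into a
  single walk visiting exactly the letters and edges of the pair.\<close>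
lemma joined_walk:
  assumes "a \<in> V_pairs k"
  defines "W \<equiv> fst a @ tl (snd a)"
  shows "W \<noteq> []" "set W = pair_supp a" "word_edges W = pair_edges a"
proof -
  note U = V_wordsD[of "fst a" k] and V = V_wordsD[of "snd a" k]
  have meet: "hd (snd a) = last (fst a)"
    using assms U V by (simp add: V_pairs_def)
  show "W \<noteq> []"
    using assms U by (simp add: W_def V_pairs_def)
  have "set (snd a) = insert (hd (snd a)) (set (tl (snd a)))"
    using assms V by (cases "snd a") (auto simp: V_pairs_def)
  then show "set W = pair_supp a"
    using meet assms U hd_in_set[of "fst a"] by (auto simp: W_def pair_supp_def V_pairs_def)
  show "word_edges W = pair_edges a"
    using assms U V meet unfolding W_def pair_edges_def V_pairs_def
    by (intro word_edges_append_tl) auto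
qed

lemma sum_ge_two:
  fixes f :: "'b \<Rightarrow> nat"
  assumes "finite S" "\<And>x. x \<in> S \<Longrightarrow> 2 \<le> f x"
  shows "2 * card S \<le> sum f S" and "2 * card S = sum f S \<Longrightarrow> x \<in> S \<Longrightarrow> f x = 2"
proof -
  have "sum f S = (\<Sum>x\<in>S. 2 + (f x - 2))"
  proof (rule sum.cong[OF refl])
    fix x assume "x \<in> S"
    then show "f x = 2 + (f x - 2)"
      using assms(2) by fastforce
  qed
  also have "\<dots> = 2 * card S + (\<Sum>x\<in>S. f x - 2)"
    by (subst sum.distrib) simp
  finally have split: "sum f S = 2 * card S + (\<Sum>x\<in>S. f x - 2)" .
  then show "2 * card S \<le> sum f S"
    by simp
  assume "2 * card S = sum f S" "x \<in> S"
  then have "f x - 2 = 0"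
    using split assms(1) by simp
  then show "f x = 2"
    using assms(2)[OF \<open>x \<in> S\<close>] by simp
qed

text \<open>A weak CLT pair in \<open>V_pairs k\<close> has 2k steps, each edge traversed at least twice, so at
  most k edges, each traversed exactly twice in the extremal case.\<close>
lemma weak_CLT_pair_edges:
  assumes "a \<in> V_pairs k" "weak_CLT_pair a"
  shows "card (pair_edges a) \<le> k"
    and "card (pair_edges a) = k \<Longrightarrow> e \<in> pair_edges a \<Longrightarrow> pair_count a e = 2"
proof -
  have sum: "sum (pair_count a) (pair_edges a) = 2 * k"
    using assms(1) sum_pair_count[of a] V_wordsD(4)[of "fst a" k] V_wordsD(4)[of "snd a" k]
    by (simp add: V_pairs_def)
  note two = sum_ge_two[of "pair_edges a" "pair_count a"]
  have fin: "finite (pair_edges a)"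
    by (simp add: pair_edges_def)
  have ge: "\<And>e. e \<in> pair_edges a \<Longrightarrow> 2 \<le> pair_count a e"
    using assms(2) by (simp add: weak_CLT_pair_def)
  show "card (pair_edges a) \<le> k"
    using two(1)[OF fin ge] sum by simp
  show "pair_count a e = 2" if "card (pair_edges a) = k" "e \<in> pair_edges a"
    using two(2)[OF fin ge _ that(2)] that(1) sum by simp
qed

text \<open>The basic chain of inequalities: vertices \<le> 1 + non-loop edges \<le> edges \<le> k; the middle
  step uses the loop edge that every word of \<open>V_words k\<close> contains.\<close>
lemma weight_chain:
  assumes "a \<in> V_pairs k"
  defines "W \<equiv> fst a @ tl (snd a)"
  shows "pair_wt a \<le> Suc (card (nonloop_edges W))"
    and "s \<in> word_edges (fst a) \<Longrightarrow> fst s = snd s \<Longrightarrow> insert s (nonloop_edges W) \<subseteq> pair_edges a"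
    and "Suc (card (nonloop_edges W)) \<le> card (pair_edges a)"
proof -
  note J = joined_walk[OF assms(1), folded W_def]
  show "pair_wt a \<le> Suc (card (nonloop_edges W))"
    using walk_vertices_le[OF J(1)] J(2) by (simp add: pair_wt_supp)
  show sub: "insert s (nonloop_edges W) \<subseteq> pair_edges a"
    if "s \<in> word_edges (fst a)" "fst s = snd s" for s
    using that J(3) by (auto simp: nonloop_edges_def pair_edges_def)
  obtain s where s: "s \<in> word_edges (fst a)" "fst s = snd s"
    using assms(1) V_wordsD(5)[of "fst a" k] by (auto simp: V_pairs_def)
  have "s \<notin> nonloop_edges W"
    using s by (simp add: nonloop_edges_def)
  then show "Suc (card (nonloop_edges W)) \<le> card (pair_edges a)"
    using card_mono[OF _ sub[OF s]] by (simp add: pair_edges_def)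
qed

lemma weak_CLT_weight_le:
  assumes "a \<in> V_pairs k" "weak_CLT_pair a"
  shows "pair_wt a \<le> k"
  using weight_chain(1,3)[OF assms(1)] weak_CLT_pair_edges(1)[OF assms] by linarith

text \<open>In the extremal case \<open>wt = k\<close> the joined walk traces a tree with one extra loop, each
  edge traversed twice; so the second word has exactly one stationary step and k - 1 moving
  steps, and since it is closed, the 2-colouring of the tree forces k - 1 to be even.\<close>
lemma weak_CLT_weight_eq_odd:
  assumes a: "a \<in> V_pairs k" and weak: "weak_CLT_pair a" and wt: "pair_wt a = k"
  shows "odd k"
proof -
  define W where "W = fst a @ tl (snd a)"
  note chain = weight_chain[OF a, folded W_def]
  obtain s where s: "s \<in> word_edges (fst a)" "fst s = snd s"
    using a V_wordsD(5)[of "fst a" k] by (auto simp: V_pairs_def)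
  have edges_k: "card (pair_edges a) = k" and tree: "card (set W) = Suc (card (nonloop_edges W))"
    using chain(1,3) weak_CLT_pair_edges(1)[OF a weak] wt joined_walk(2)[OF a, folded W_def]
    by (simp_all add: pair_wt_supp)
  moreover have "s \<notin> nonloop_edges W"
    using s(2) by (simp add: nonloop_edges_def)
  ultimately have edges: "pair_edges a = insert s (nonloop_edges W)"
    using chain(1,3) chain(2)[OF s] wt by (intro card_subset_eq[symmetric])
      (auto simp: pair_edges_def)
  obtain c :: "nat \<Rightarrow> bool" where c: "\<forall>e\<in>nonloop_edges W. c (fst e) \<noteq> c (snd e)"
    using tree_walk_colouring[OF joined_walk(1)[OF a, folded W_def] tree] by blast
  define V where "V = snd a"
  have V: "V \<in> V_words k"
    using a by (simp add: V_def V_pairs_def)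
  have V_edges: "word_edges V \<subseteq> pair_edges a"
    by (simp add: V_def pair_edges_def)
  have loops: "e = s" if "e \<in> word_edges V" "fst e = snd e" for e
    using that V_edges edges by (auto simp: nonloop_edges_def)
  then have "s \<in> word_edges V"
    using V_wordsD(5)[OF V] by blast
  moreover have "pair_count a s = 2"
    using weak_CLT_pair_edges(2)[OF a weak edges_k] edges by simp
  ultimately have "edge_count V s = 1"
    using edge_count_pos[OF s(1)] edge_count_pos[of s V] by (simp add: pair_count_def V_def)
  then have "Suc (card (moving_steps V)) = k"
    using single_loop_step[OF s(2) _ loops] V_wordsD(4)[OF V] by simp
  moreover have "nonloop_edges V \<subseteq> nonloop_edges W"
    using V_edges joined_walk(3)[OF a, folded W_def] by (auto simp: nonloop_edges_def)
  then have "even (card (moving_steps V))"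
    using walk_colour_parity[of V c] V_wordsD(1-3)[OF V] c by auto
  ultimately show ?thesis
    by auto
qed

definition occ_order :: "nat list \<Rightarrow> nat list" where
  "occ_order xs = rev (remdups (rev xs))"

definition index_of :: "nat list \<Rightarrow> nat \<Rightarrow> nat" where
  "index_of xs x = length (takeWhile (\<lambda>y. y \<noteq> x) xs)"

lemma set_occ_order [simp]: "set (occ_order xs) = set xs"
  by (simp add: occ_order_def)

lemma distinct_occ_order [simp]: "distinct (occ_order xs)"
  by (simp add: occ_order_def)

lemma remdups_map_inj: "inj_on f (set xs) \<Longrightarrow> remdups (map f xs) = map f (remdups xs)"
proof (induction xs)
  case (Cons x xs)
  have "inj_on f (set xs)"
    using Cons.prems by (auto intro: inj_on_subset)
  moreover have "f x \<in> f ` set xs \<longleftrightarrow> x \<in> set xs"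
    using Cons.prems by (auto simp: inj_on_def)
  ultimately show ?case
    using Cons.IH by simp
qed simp

lemma occ_order_map: "inj_on f (set xs) \<Longrightarrow> occ_order (map f xs) = map f (occ_order xs)"
  using remdups_map_inj[of f "rev xs"] by (simp add: occ_order_def rev_map[symmetric])

lemma hd_occ_order: "hd (occ_order (x # ys)) = x"
proof -
  have "remdups (zs @ [x]) = remdups (filter (\<lambda>y. y \<noteq> x) zs) @ [x]" for zs
    by (induction zs) auto
  then show ?thesis
    by (simp add: occ_order_def)
qed

lemma index_of_less: "x \<in> set xs \<Longrightarrow> index_of xs x < length xs"
  by (induction xs) (auto simp: index_of_def)

lemma nth_index_of: "x \<in> set xs \<Longrightarrow> xs ! index_of xs x = x"
  using nth_length_takeWhile[of "\<lambda>y. y \<noteq> x" xs] index_of_less[of x xs] by (simp add: index_of_def)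

lemma index_of_nth: "distinct xs \<Longrightarrow> i < length xs \<Longrightarrow> index_of xs (xs ! i) = i"
  using nth_index_of[of "xs ! i" xs] index_of_less[of "xs ! i" xs]
    nth_eq_iff_index_eq[of xs "index_of xs (xs ! i)" i]
  by simp

lemma inj_on_index_of: "inj_on (index_of xs) (set xs)"
  by (rule inj_onI) (metis nth_index_of)

lemma index_of_map:
  assumes "inj_on \<phi> (set xs)" "x \<in> set xs"
  shows "index_of (map \<phi> xs) (\<phi> x) = index_of xs x"
proof -
  have "takeWhile ((\<lambda>y. y \<noteq> \<phi> x) \<circ> \<phi>) xs = takeWhile (\<lambda>y. y \<noteq> x) xs"
    using assms by (intro takeWhile_cong) (auto simp: inj_on_def)
  then show ?thesis
    unfolding index_of_def takeWhile_map by simp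
qed

lemma index_of_hd: "xs \<noteq> [] \<Longrightarrow> index_of xs (hd xs) = 0"
  by (cases xs) (auto simp: index_of_def)

definition letters :: "nat list \<times> nat list \<Rightarrow> nat list" where
  "letters a = occ_order (fst a @ snd a)"

definition occ_rank :: "nat list \<times> nat list \<Rightarrow> nat \<Rightarrow> nat" where
  "occ_rank a x = Suc (index_of (letters a) x)"

definition canon :: "nat list \<times> nat list \<Rightarrow> nat list \<times> nat list" where
  "canon a = relabel (occ_rank a) a"

definition decode :: "nat list \<Rightarrow> nat list \<times> nat list \<Rightarrow> nat list \<times> nat list" where
  "decode L c = relabel (\<lambda>i. L ! (i - 1)) c"

lemma set_letters: "set (letters a) = pair_supp a"
  by (simp add: letters_def pair_supp_def)

lemma distinct_letters: "distinct (letters a)"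
  by (simp add: letters_def)

lemma length_letters: "length (letters a) = pair_wt a"
  using distinct_card[OF distinct_letters[of a]] by (simp add: set_letters pair_wt_supp)

lemma inj_on_rank: "inj_on (occ_rank a) (pair_supp a)"
  using inj_on_index_of[of "letters a"] by (auto simp: occ_rank_def set_letters inj_on_def)

lemma decode_canon: "decode (letters a) (canon a) = a"
  unfolding decode_def canon_def relabel_comp
  by (rule relabel_id) (simp add: occ_rank_def nth_index_of set_letters)

lemma letters_relabel: "inj_on \<phi> (pair_supp a) \<Longrightarrow> letters (relabel \<phi> a) = map \<phi> (letters a)"
  unfolding letters_def relabel_def
  by (simp add: map_append[symmetric] occ_order_map pair_supp_def del: map_append)

lemma canon_relabel:
  assumes "inj_on \<phi> (pair_supp a)"
  shows "canon (relabel \<phi> a) = canon a"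
proof -
  have "canon (relabel \<phi> a) = relabel (\<lambda>x. occ_rank (relabel \<phi> a) (\<phi> x)) a"
    unfolding canon_def relabel_comp ..
  also have "\<dots> = relabel (occ_rank a) a"
  proof (rule relabel_cong)
    fix x assume "x \<in> pair_supp a"
    then show "occ_rank (relabel \<phi> a) (\<phi> x) = occ_rank a x"
      unfolding occ_rank_def letters_relabel[OF assms] using index_of_map[of \<phi> "letters a" x] assms
      by (simp add: set_letters)
  qed
  finally show ?thesis
    by (simp add: canon_def)
qed

lemma canon_canon: "canon (canon a) = canon a"
  using canon_relabel[OF inj_on_rank, of a] by (simp only: canon_def[of a])

lemma letters_canon: "letters (canon a) = map Suc [0..<pair_wt a]"
proof -
  have "letters (canon a) = map (occ_rank a) (letters a)"
    unfolding canon_def by (rule letters_relabel[OF inj_on_rank])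
  also have "\<dots> = map (\<lambda>i. occ_rank a (letters a ! i)) [0..<length (letters a)]"
    by (subst map_nth[symmetric, of "letters a"]) (simp only: map_map comp_def)
  also have "\<dots> = map Suc [0..<length (letters a)]"
    by (rule map_cong[OF refl]) (simp add: occ_rank_def index_of_nth distinct_letters)
  finally show ?thesis
    by (simp add: length_letters)
qed

lemma pair_wt_canon: "pair_wt (canon a) = pair_wt a"
  unfolding canon_def by (rule pair_wt_relabel[OF inj_on_rank])

lemma pair_supp_canon: "pair_supp (canon a) = {1..pair_wt a}"
proof -
  have "pair_supp (canon a) = Suc ` {0..<pair_wt a}"
    using letters_canon[of a] set_letters[of "canon a"] by simp
  also have "\<dots> = {1..pair_wt a}"
    by (auto simp: image_iff)
  finally show ?thesis .
qed

lemma pair_equiv_iff_canon: "pair_equiv a b \<longleftrightarrow> canon a = canon b"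
proof
  assume "pair_equiv a b"
  then obtain \<phi> where \<phi>: "bij_betw \<phi> (pair_supp a) (pair_supp b)"
    "map \<phi> (fst a) = fst b" "map \<phi> (snd a) = snd b"
    by (auto simp: pair_equiv_def pair_supp_def)
  then have "b = relabel \<phi> a"
    by (cases b) (auto simp: relabel_def)
  then show "canon a = canon b"
    using canon_relabel[OF bij_betw_imp_inj_on[OF \<phi>(1)]] by simp
next
  assume eq: "canon a = canon b"
  define \<phi> where "\<phi> x = letters b ! index_of (letters a) x" for x
  have "b = decode (letters b) (canon a)"
    using decode_canon[of b] eq by simp
  also have "\<dots> = relabel \<phi> a"
    unfolding decode_def canon_def relabel_comp by (rule relabel_cong) (simp add: occ_rank_def \<phi>_def)
  finally have b: "b = relabel \<phi> a" .
  have same_length: "length (letters a) = length (letters b)"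
    using pair_wt_canon[of a] pair_wt_canon[of b] eq by (simp add: length_letters)
  have "inj_on \<phi> (pair_supp a)"
  proof (rule inj_onI)
    fix x y assume x: "x \<in> pair_supp a" and y: "y \<in> pair_supp a" and h: "\<phi> x = \<phi> y"
    have "index_of (letters a) x < length (letters b)" "index_of (letters a) y < length (letters b)"
      using index_of_less[of x "letters a"] index_of_less[of y "letters a"] x y same_length
      by (auto simp: set_letters)
    then have "index_of (letters a) x = index_of (letters a) y"
      using h nth_eq_iff_index_eq[OF distinct_letters] by (simp add: \<phi>_def)
    then show "x = y"
      using inj_on_index_of[of "letters a"] x y by (auto simp: set_letters dest: inj_onD)
  qed
  then have "bij_betw \<phi> (pair_supp a) (pair_supp b)"
    unfolding bij_betw_def b pair_supp_relabel by simp
  then show "pair_equiv a b"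
    using b by (auto simp: pair_equiv_def pair_supp_def relabel_def)
qed

lemma map_V_words:
  assumes w: "w \<in> V_words k" and inj: "inj_on \<phi> (set w)" and one: "\<phi> 1 = 1"
    and positive: "\<forall>x\<in>set w. 1 \<le> \<phi> x"
  shows "map \<phi> w \<in> V_words k"
proof -
  obtain s where s: "s \<in> word_edges w" "fst s = snd s"
    using V_wordsD(5)[OF w] by blast
  then have "edge_map \<phi> s \<in> word_edges (map \<phi> w)" "fst (edge_map \<phi> s) = snd (edge_map \<phi> s)"
    using edge_map_loop[OF inj] word_edge_ends[OF s(1)] by (auto simp: word_edges_map)
  then show ?thesis
    using V_wordsD[OF w] positive one
    by (auto simp: V_words_def closed_word_def hd_map last_map)
qed

text \<open>The first letter of a pair of \<open>V_pairs k\<close> is 1, so canonical relabelling fixes 1 and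
  maps \<open>V_pairs k\<close> into itself.\<close>
lemma letters_V_pairs:
  assumes "a \<in> V_pairs k"
  shows "letters a \<noteq> []" "hd (letters a) = 1"
proof -
  obtain t where "fst a = 1 # t"
    using assms V_wordsD(1,2)[of "fst a" k] by (cases "fst a") (auto simp: V_pairs_def)
  then have "letters a = occ_order (1 # (t @ snd a))"
    by (simp add: letters_def)
  then show "letters a \<noteq> []" "hd (letters a) = 1"
    using hd_occ_order set_occ_order[of "1 # (t @ snd a)"] by (auto simp del: set_occ_order)
qed

lemma canon_V_pairs:
  assumes "a \<in> V_pairs k"
  shows "canon a \<in> V_pairs k"
proof -
  have "occ_rank a 1 = 1"
    using letters_V_pairs[OF assms] index_of_hd[of "letters a"] by (simp add: occ_rank_def)
  moreover have "inj_on (occ_rank a) (set (fst a))" "inj_on (occ_rank a) (set (snd a))"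
    using inj_on_rank[of a] by (auto simp: pair_supp_def intro: inj_on_subset)
  ultimately show ?thesis
    using assms map_V_words by (auto simp: V_pairs_def canon_def relabel_def occ_rank_def)
qed

text \<open>Pairs of words of \<open>V_k\<close> over the alphabet \<open>{1..N}\<close>, the canonical pairs, and the
  labellings \<open>L\<close> that realise a canonical pair of weight m over \<open>{1..N}\<close>: injective lists of
  length m in \<open>{1..N}\<close> starting with the fixed letter 1.\<close>
definition V_pairs_N :: "nat \<Rightarrow> nat \<Rightarrow> (nat list \<times> nat list) set" where
  "V_pairs_N N k = {a \<in> V_pairs k. pair_supp a \<subseteq> {1..N}}"

definition canon_pairs :: "nat \<Rightarrow> (nat list \<times> nat list) set" where
  "canon_pairs k = canon ` V_pairs k"

definition labellings :: "nat \<Rightarrow> nat \<Rightarrow> nat list set" where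
  "labellings N m = {L. distinct L \<and> length L = m \<and> set L \<subseteq> {1..N} \<and> L \<noteq> [] \<and> hd L = 1}"

lemma V_pairs_N_eq: "V_pairs_N N k = V_words_N N k \<times> V_words_N N k"
  by (auto simp: V_pairs_N_def V_pairs_def V_words_N_def pair_supp_def)

lemma canon_pairsD:
  assumes "c \<in> canon_pairs k"
  shows "c \<in> V_pairs k" "canon c = c" "pair_supp c = {1..pair_wt c}"
    "letters c = map Suc [0..<pair_wt c]"
  using assms canon_V_pairs canon_canon pair_supp_canon[of "canon _"] letters_canon[of "canon _"]
  by (auto simp: canon_pairs_def pair_wt_canon)

lemma decode_labelling:
  assumes c: "c \<in> canon_pairs k" and L: "L \<in> labellings N (pair_wt c)"
  shows "decode L c \<in> V_pairs_N N k" "letters (decode L c) = L" "canon (decode L c) = c"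
proof -
  note C = canon_pairsD[OF c]
  define \<phi> where "\<phi> i = L ! (i - 1)" for i
  have decode: "decode L c = relabel \<phi> c"
    unfolding decode_def by (rule relabel_cong) (simp add: \<phi>_def)
  have L_props: "distinct L" "length L = pair_wt c" "L \<noteq> []" "hd L = 1" "set L \<subseteq> {1..N}"
    using L by (auto simp: labellings_def)
  have inj: "inj_on \<phi> (pair_supp c)"
  proof (rule inj_onI)
    fix x y assume xy: "x \<in> pair_supp c" "y \<in> pair_supp c" and eq: "\<phi> x = \<phi> y"
    then have bounds: "1 \<le> x" "x \<le> length L" "1 \<le> y" "y \<le> length L"
      using C(3) L_props(2) by auto
    then have "x - 1 = y - 1"
      using eq nth_eq_iff_index_eq[OF L_props(1), of "x - 1" "y - 1"] by (simp add: \<phi>_def)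
    then show "x = y"
      using bounds by simp
  qed
  have one: "\<phi> 1 = 1"
    using L_props(3,4) by (cases L) (auto simp: \<phi>_def)
  have in_L: "\<phi> x \<in> set L" if "x \<in> pair_supp c" for x
    using that C(3) L_props(2) by (auto simp: \<phi>_def)
  have positive: "1 \<le> \<phi> x" if "x \<in> pair_supp c" for x
    using in_L[OF that] L_props(5) by auto
  have "map \<phi> w \<in> V_words k" if "w = fst c \<or> w = snd c" for w
    using that C(1) positive inj one
    by (intro map_V_words) (auto simp: V_pairs_def pair_supp_def intro: inj_on_subset)
  moreover have "pair_supp (decode L c) \<subseteq> {1..N}"
    using in_L L_props(5) by (auto simp: decode pair_supp_relabel)
  ultimately show "decode L c \<in> V_pairs_N N k"
    by (auto simp: V_pairs_N_def V_pairs_def decode relabel_def)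
  have "letters (decode L c) = map \<phi> (letters c)"
    unfolding decode by (rule letters_relabel[OF inj])
  also have "\<dots> = L"
    using C(4) L_props(2) map_nth[of L] by (simp add: \<phi>_def comp_def)
  finally show "letters (decode L c) = L" .
  show "canon (decode L c) = c"
    unfolding decode canon_relabel[OF inj] C(2) ..
qed

lemma letters_labelling: "a \<in> V_pairs_N N k \<Longrightarrow> letters a \<in> labellings N (pair_wt a)"
  using letters_V_pairs[of a k]
  by (auto simp: V_pairs_N_def labellings_def distinct_letters length_letters set_letters)

lemma class_labellings_bij:
  assumes "c \<in> canon_pairs k"
  shows "bij_betw letters {a \<in> V_pairs_N N k. canon a = c} (labellings N (pair_wt c))"
proof (rule bij_betw_byWitness[where f' = "\<lambda>L. decode L c"])
  show "\<forall>a\<in>{a \<in> V_pairs_N N k. canon a = c}. decode (letters a) c = a"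
    using decode_canon by auto
  show "\<forall>L\<in>labellings N (pair_wt c). letters (decode L c) = L"
    using decode_labelling(2)[OF assms] by blast
  show "letters ` {a \<in> V_pairs_N N k. canon a = c} \<subseteq> labellings N (pair_wt c)"
    using letters_labelling pair_wt_canon by fastforce
  show "(\<lambda>L. decode L c) ` labellings N (pair_wt c) \<subseteq> {a \<in> V_pairs_N N k. canon a = c}"
    using decode_labelling(1,3)[OF assms] by blast
qed

lemma finite_V_pairs_N: "finite (V_pairs_N N k)"
proof -
  let ?S = "{xs. set xs \<subseteq> {1..N} \<and> length xs = k + 1}"
  have "V_pairs_N N k \<subseteq> ?S \<times> ?S"
    by (auto simp: V_pairs_N_def V_pairs_def pair_supp_def dest: V_wordsD(4))
  moreover have "finite (?S \<times> ?S)"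
    using finite_lists_length_eq[of "{1..N}" "k + 1"] by simp
  ultimately show ?thesis
    by (rule finite_subset)
qed

text \<open>A pair of two words of length k + 1 has at most 2k + 2 letters, so there are finitely
  many canonical pairs.\<close>
lemma finite_canon_pairs: "finite (canon_pairs k)"
proof -
  have "canon_pairs k \<subseteq> V_pairs_N (2 * k + 2) k"
  proof
    fix c assume c: "c \<in> canon_pairs k"
    have "pair_wt c \<le> length (fst c @ snd c)"
      using card_length[of "fst c @ snd c"] by (simp add: pair_wt_def)
    then have "pair_wt c \<le> 2 * k + 2"
      using canon_pairsD(1)[OF c] V_wordsD(4)[of "fst c" k] V_wordsD(4)[of "snd c" k]
      by (simp add: V_pairs_def)
    then show "c \<in> V_pairs_N (2 * k + 2) k"
      using canon_pairsD(1,3)[OF c] by (auto simp: V_pairs_N_def)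
  qed
  then show ?thesis
    using finite_V_pairs_N by (rule finite_subset)
qed

lemma sum_over_classes:
  assumes g: "\<And>a. a \<in> V_pairs k \<Longrightarrow> g a = g (canon a)"
  shows "(\<Sum>a\<in>V_pairs_N N k. g a) = (\<Sum>c\<in>canon_pairs k. g c * real (card (labellings N (pair_wt c))))"
proof -
  have "(\<Sum>a\<in>V_pairs_N N k. g a) = (\<Sum>c\<in>canon_pairs k. \<Sum>a\<in>{a \<in> V_pairs_N N k. canon a = c}. g a)"
    by (rule sum.group[symmetric, OF finite_V_pairs_N finite_canon_pairs])
      (auto simp: canon_pairs_def V_pairs_N_def)
  also have "\<dots> = (\<Sum>c\<in>canon_pairs k. g c * real (card (labellings N (pair_wt c))))"
  proof (rule sum.cong[OF refl])
    fix c assume c: "c \<in> canon_pairs k"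
    have "(\<Sum>a\<in>{a \<in> V_pairs_N N k. canon a = c}. g a) = (\<Sum>a\<in>{a \<in> V_pairs_N N k. canon a = c}. g c)"
      using g by (intro sum.cong) (auto simp: V_pairs_N_def)
    then show "(\<Sum>a\<in>{a \<in> V_pairs_N N k. canon a = c}. g a) = g c * real (card (labellings N (pair_wt c)))"
      using bij_betw_same_card[OF class_labellings_bij[OF c]] by simp
  qed
  finally show ?thesis .
qed

lemma card_labellings:
  assumes "1 \<le> m" "m \<le> N"
  shows "card (labellings N m) = \<Prod>{N - m + 1..N - 1}"
proof -
  let ?X = "{L'. length L' = m - 1 \<and> distinct L' \<and> set L' \<subseteq> {2..N}}"
  have "labellings N m = Cons 1 ` ?X"
  proof
    show "labellings N m \<subseteq> Cons 1 ` ?X"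
    proof
      fix L assume L: "L \<in> labellings N m"
      then obtain t where t: "L = 1 # t"
        unfolding labellings_def by (cases L) auto
      moreover have "1 \<notin> set t" "set t \<subseteq> {1..N}"
        using L t by (auto simp: labellings_def)
      have "set t \<subseteq> {2..N}"
      proof
        fix y assume "y \<in> set t"
        then have "1 \<le> y" "y \<le> N" "y \<noteq> 1"
          using \<open>1 \<notin> set t\<close> \<open>set t \<subseteq> {1..N}\<close> by auto
        then show "y \<in> {2..N}"
          by simp
      qed
      then show "L \<in> Cons 1 ` ?X"
        using L t by (auto simp: labellings_def)
    qed
    show "Cons 1 ` ?X \<subseteq> labellings N m"
      using assms by (force simp: labellings_def)
  qed
  then have "card (labellings N m) = card ?X"
    by (simp add: card_image)
  also have "\<dots> = \<Prod>{card {2..N} - (m - 1) + 1..card {2..N}}"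
    by (rule card_lists_distinct_length_eq) (use assms in auto)
  also have "\<dots> = \<Prod>{N - m + 1..N - 1}"
    using assms by auto
  finally show ?thesis .
qed

lemma labellings_bounds:
  assumes "1 \<le> m" "m \<le> N"
  shows "(N - m + 1) ^ (m - 1) \<le> card (labellings N m)" "card (labellings N m) \<le> N ^ (m - 1)"
proof -
  have card_A: "card {N - m + 1..N - 1} = m - 1"
    using assms by simp
  show "card (labellings N m) \<le> N ^ (m - 1)"
    unfolding card_labellings[OF assms] by (rule prod_le_power) (use assms card_A in auto)
  have "(N - m + 1) ^ (m - 1) = (\<Prod>i\<in>{N - m + 1..N - 1}. N - m + 1)"
    using card_A by simp
  also have "\<dots> \<le> \<Prod>{N - m + 1..N - 1}"
    by (rule prod_mono) auto
  finally show "(N - m + 1) ^ (m - 1) \<le> card (labellings N m)"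
    unfolding card_labellings[OF assms] .
qed

lemma labellings_limit_small:
  assumes "1 \<le> m" "m < k"
  shows "(\<lambda>N. real (card (labellings N m)) / real N ^ (k - 1)) \<longlonglongrightarrow> 0"
proof (rule tendsto_sandwich[OF _ _ tendsto_const lim_const_over_n])
  show "\<forall>\<^sub>F N in sequentially. 0 \<le> real (card (labellings N m)) / real N ^ (k - 1)"
    by simp
  show "\<forall>\<^sub>F N in sequentially. real (card (labellings N m)) / real N ^ (k - 1) \<le> 1 / real N"
    unfolding eventually_sequentially
  proof (intro exI allI impI)
    fix N assume N: "k \<le> N"
    then have N_ge_1: "1 \<le> real N"
      using assms by simp
    have "real (card (labellings N m)) \<le> real N ^ (m - 1)"
      using labellings_bounds(2)[of m N] assms N by (simp flip: of_nat_power)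
    then have "real (card (labellings N m)) / real N ^ (k - 1) \<le> real N ^ (m - 1) / real N ^ (k - 1)"
      by (rule divide_right_mono) simp
    also have "\<dots> = 1 / real N ^ (k - m)"
      using assms N_ge_1 by (simp add: power_diff[symmetric] field_simps flip: power_add)
    also have "\<dots> \<le> 1 / real N"
      using power_increasing[of 1 "k - m" "real N"] N_ge_1 assms
      by (intro divide_left_mono) auto
    finally show "real (card (labellings N m)) / real N ^ (k - 1) \<le> 1 / real N" .
  qed
qed

lemma labellings_limit_top:
  assumes "1 \<le> k"
  shows "(\<lambda>N. real (card (labellings N k)) / real N ^ (k - 1)) \<longlonglongrightarrow> 1"
proof -
  have lower: "(\<lambda>N. (1 - (real k - 1) / real N) ^ (k - 1)) \<longlonglongrightarrow> 1"
    using tendsto_power[OF tendsto_diff[OF tendsto_const lim_const_over_n], of 1 "real k - 1" "k - 1"]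
    by simp
  show ?thesis
  proof (rule tendsto_sandwich[OF _ _ lower tendsto_const])
    show "\<forall>\<^sub>F N in sequentially. (1 - (real k - 1) / real N) ^ (k - 1)
        \<le> real (card (labellings N k)) / real N ^ (k - 1)"
      unfolding eventually_sequentially
    proof (intro exI allI impI)
      fix N assume N: "k \<le> N"
      then have "(N - k + 1) ^ (k - 1) \<le> card (labellings N k)"
        using labellings_bounds(1)[of k N] assms by simp
      then have "real (N - k + 1) ^ (k - 1) \<le> real (card (labellings N k))"
        by (metis of_nat_mono of_nat_power)
      moreover have "1 - (real k - 1) / real N = real (N - k + 1) / real N"
        using N assms by (simp add: of_nat_diff field_simps)
      ultimately show "(1 - (real k - 1) / real N) ^ (k - 1) \<le> real (card (labellings N k)) / real N ^ (k - 1)"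
        by (simp add: power_divide divide_right_mono)
    qed
    show "\<forall>\<^sub>F N in sequentially. real (card (labellings N k)) / real N ^ (k - 1) \<le> 1"
      unfolding eventually_sequentially
    proof (intro exI allI impI)
      fix N assume N: "k \<le> N"
      then have "real (card (labellings N k)) \<le> real N ^ (k - 1)"
        using labellings_bounds(2)[of k N] assms by (simp flip: of_nat_power)
      then show "real (card (labellings N k)) / real N ^ (k - 1) \<le> 1"
        using N assms by (simp add: divide_le_eq_1)
    qed
  qed
qed

lemma CLT_pairs_iff: "a \<in> CLT_pairs k \<longleftrightarrow> a \<in> V_pairs k \<and> weak_CLT_pair a \<and> pair_wt a = k"
  by (simp add: CLT_pairs_def V_pairs_def)

lemma canon_CLT_pairs: "canon ` CLT_pairs k = {c \<in> canon_pairs k. weak_CLT_pair c \<and> pair_wt c = k}"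
proof -
  have "weak_CLT_pair (canon a) \<longleftrightarrow> weak_CLT_pair a" "pair_wt (canon a) = pair_wt a" for a
    unfolding canon_def by (simp_all add: weak_CLT_pair_relabel[OF inj_on_rank] pair_wt_relabel[OF inj_on_rank])
  then show ?thesis
    by (auto simp: canon_pairs_def CLT_pairs_iff)
qed

lemma CLT_pairs_even: "even k \<Longrightarrow> CLT_pairs k = {}"
  using weak_CLT_weight_eq_odd by (auto simp: CLT_pairs_iff)

lemma CLT_class_eq:
  assumes "C \<in> CLT_pairs k // CLT_pair_rel k"
  shows "(SOME a. a \<in> C) \<in> CLT_pairs k" "C = {b \<in> CLT_pairs k. canon b = canon (SOME a. a \<in> C)}"
proof -
  obtain a0 where a0: "a0 \<in> CLT_pairs k" "C = CLT_pair_rel k `` {a0}"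
    using assms by (rule quotientE)
  then have C: "C = {b \<in> CLT_pairs k. canon b = canon a0}"
    by (auto simp: CLT_pair_rel_def pair_equiv_iff_canon)
  then have "(SOME a. a \<in> C) \<in> C"
    using a0(1) by (intro someI) simp
  then show "(SOME a. a \<in> C) \<in> CLT_pairs k" "C = {b \<in> CLT_pairs k. canon b = canon (SOME a. a \<in> C)}"
    using C by auto
qed

lemma sum_CLT_classes:
  assumes "\<And>a. a \<in> CLT_pairs k \<Longrightarrow> f a = g (canon a)"
  shows "(\<Sum>C\<in>CLT_pairs k // CLT_pair_rel k. f (SOME a. a \<in> C)) = (\<Sum>c\<in>canon ` CLT_pairs k. g c)"
proof (rule sum.reindex_cong[symmetric, where l = "\<lambda>C. canon (SOME a. a \<in> C)"])
  show "inj_on (\<lambda>C. canon (SOME a. a \<in> C)) (CLT_pairs k // CLT_pair_rel k)"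
  proof (rule inj_onI)
    fix C D assume C: "C \<in> CLT_pairs k // CLT_pair_rel k" and D: "D \<in> CLT_pairs k // CLT_pair_rel k"
      and eq: "canon (SOME a. a \<in> C) = canon (SOME a. a \<in> D)"
    have "C = {b \<in> CLT_pairs k. canon b = canon (SOME a. a \<in> D)}"
      using CLT_class_eq(2)[OF C] by (simp only: eq)
    also have "\<dots> = D"
      using CLT_class_eq(2)[OF D] by (rule sym)
    finally show "C = D" .
  qed
  show "canon ` CLT_pairs k = (\<lambda>C. canon (SOME a. a \<in> C)) ` (CLT_pairs k // CLT_pair_rel k)"
  proof
    show "canon ` CLT_pairs k \<subseteq> (\<lambda>C. canon (SOME a. a \<in> C)) ` (CLT_pairs k // CLT_pair_rel k)"
    proof
      fix c assume "c \<in> canon ` CLT_pairs k"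
      then obtain a where a: "a \<in> CLT_pairs k" "c = canon a"
        by blast
      define C where "C = CLT_pair_rel k `` {a}"
      define r where "r = canon (SOME a. a \<in> C)"
      have C: "C \<in> CLT_pairs k // CLT_pair_rel k"
        unfolding C_def using a(1) by (rule quotientI)
      moreover have "a \<in> C"
        using a(1) by (simp add: C_def CLT_pair_rel_def pair_equiv_iff_canon)
      then have "r = c"
        using CLT_class_eq(2)[OF C, folded r_def] a(2) by simp
      then have "canon (SOME a. a \<in> C) = c"
        by (simp only: r_def)
      ultimately show "c \<in> (\<lambda>C. canon (SOME a. a \<in> C)) ` (CLT_pairs k // CLT_pair_rel k)"
        by (metis image_eqI)
    qed
    show "(\<lambda>C. canon (SOME a. a \<in> C)) ` (CLT_pairs k // CLT_pair_rel k) \<subseteq> canon ` CLT_pairs k"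
      using CLT_class_eq(1) by blast
  qed
  show "g (canon (SOME a. a \<in> C)) = f (SOME a. a \<in> C)" if "C \<in> CLT_pairs k // CLT_pair_rel k" for C
    using assms CLT_class_eq(1)[OF that] by simp
qed

lemma class_contribution_limit:
  assumes mean_zero: "\<And>e. \<mu> e 1 = 0" and c: "c \<in> canon_pairs k"
  shows "(\<lambda>N. pair_cov \<mu> c * (real (card (labellings N (pair_wt c))) / real N ^ (k - 1)))
      \<longlonglongrightarrow> (if weak_CLT_pair c \<and> pair_wt c = k then pair_cov \<mu> c else 0)"
proof (cases "weak_CLT_pair c")
  case False
  then show ?thesis
    using pair_cov_eq_0[of \<mu>, OF mean_zero] by simp
next
  case True
  have "pair_supp c \<noteq> {}"
    using canon_pairsD(1)[OF c] V_wordsD(1)[of "fst c" k]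
    by (cases "fst c") (auto simp: V_pairs_def pair_supp_def)
  then have "1 \<le> pair_wt c"
    by (simp add: pair_wt_supp Suc_le_eq card_gt_0_iff pair_supp_def)
  moreover have "pair_wt c \<le> k"
    using weak_CLT_weight_le[OF canon_pairsD(1)[OF c] True] .
  ultimately have "(\<lambda>N. real (card (labellings N (pair_wt c))) / real N ^ (k - 1))
      \<longlonglongrightarrow> (if pair_wt c = k then 1 else 0)"
    using labellings_limit_small[of "pair_wt c" k] labellings_limit_top[of k] by auto
  then have "(\<lambda>N. pair_cov \<mu> c * (real (card (labellings N (pair_wt c))) / real N ^ (k - 1)))
      \<longlonglongrightarrow> pair_cov \<mu> c * (if pair_wt c = k then 1 else 0)"
    by (rule tendsto_mult_left)
  then show ?thesis
    using True by (cases "pair_wt c = k") simp_all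
qed

lemma class_sum_limit:
  assumes "\<And>e. \<mu> e 1 = 0"
  shows "(\<lambda>N. \<Sum>c\<in>canon_pairs k. pair_cov \<mu> c * (real (card (labellings N (pair_wt c))) / real N ^ (k - 1)))
      \<longlonglongrightarrow> (\<Sum>c\<in>canon ` CLT_pairs k. pair_cov \<mu> c)"
proof -
  have "(\<Sum>c\<in>canon_pairs k. if weak_CLT_pair c \<and> pair_wt c = k then pair_cov \<mu> c else 0)
      = (\<Sum>c\<in>canon ` CLT_pairs k. pair_cov \<mu> c)"
    by (simp add: sum.inter_filter[OF finite_canon_pairs] canon_CLT_pairs)
  moreover have "(\<lambda>N. \<Sum>c\<in>canon_pairs k. pair_cov \<mu> c * (real (card (labellings N (pair_wt c))) / real N ^ (k - 1)))
      \<longlonglongrightarrow> (\<Sum>c\<in>canon_pairs k. if weak_CLT_pair c \<and> pair_wt c = k then pair_cov \<mu> c else 0)"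
    by (rule tendsto_sum) (rule class_contribution_limit[of \<mu>, OF assms])
  ultimately show ?thesis
    by (simp only:)
qed

lemma integrable_power_of_abs:
  fixes X :: "'a \<Rightarrow> real"
  assumes "X \<in> borel_measurable M" "integrable M (\<lambda>x. \<bar>X x\<bar> ^ n)"
  shows "integrable M (\<lambda>x. X x ^ n)"
proof -
  have "(\<lambda>x. X x ^ n) \<in> borel_measurable M"
    using assms(1) by measurable
  moreover have "(\<lambda>x. \<bar>X x ^ n\<bar>) = (\<lambda>x. \<bar>X x\<bar> ^ n)"
    by (simp add: power_abs)
  ultimately show ?thesis
    using integrable_abs_iff assms(2) by metis
qed

lemma same_distribution_power:
  fixes X Y :: "'a \<Rightarrow> real"
  assumes X: "X \<in> borel_measurable M" and Y: "Y \<in> borel_measurable M"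
    and distr: "distr M borel X = distr M borel Y" and int_Y: "integrable M (\<lambda>x. Y x ^ n)"
  shows "integrable M (\<lambda>x. X x ^ n)" "integral\<^sup>L M (\<lambda>x. X x ^ n) = integral\<^sup>L M (\<lambda>x. Y x ^ n)"
proof -
  have pow: "(\<lambda>t::real. t ^ n) \<in> borel_measurable borel"
    by measurable
  have "integrable (distr M borel X) (\<lambda>t. t ^ n)"
    using integrable_distr_eq[OF Y pow] int_Y distr by simp
  then show "integrable M (\<lambda>x. X x ^ n)"
    using integrable_distr_eq[OF X pow] by simp
  show "integral\<^sup>L M (\<lambda>x. X x ^ n) = integral\<^sup>L M (\<lambda>x. Y x ^ n)"
    using integral_distr[OF X pow] integral_distr[OF Y pow] distr by simp
qed

lemma T_word_pair:
  "T_word \<xi> (fst a) x * T_word \<xi> (snd a) x = (\<Prod>e\<in>pair_edges a. \<xi> (fst e) (snd e) x ^ pair_count a e)"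
proof -
  have "T_word \<xi> w x = (\<Prod>e\<in>pair_edges a. \<xi> (fst e) (snd e) x ^ edge_count w e)"
    if "w = fst a \<or> w = snd a" for w
    using that unfolding T_word_def pair_edges_def
    by (intro prod.mono_neutral_left) (auto simp: edge_count_eq_0)
  then show ?thesis
    by (simp add: pair_count_def power_add prod.distrib)
qed

lemma word_edges_upper:
  "\<forall>x\<in>set w. 1 \<le> x \<Longrightarrow> word_edges w \<subseteq> {p. 1 \<le> fst p \<and> fst p \<le> snd p}"
  by (auto simp: word_edges_def min_def max_def)

locale wigner_entries = prob_space M for M :: "'a measure" +
  fixes \<xi> :: "nat \<Rightarrow> nat \<Rightarrow> 'a \<Rightarrow> real"
  assumes meas: "\<And>i j. 1 \<le> i \<Longrightarrow> i \<le> j \<Longrightarrow> \<xi> i j \<in> borel_measurable M"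
    and indep: "indep_vars (\<lambda>_. borel) (\<lambda>p. \<xi> (fst p) (snd p)) {p. 1 \<le> fst p \<and> fst p \<le> snd p}"
    and diag_id: "\<And>i. 1 \<le> i \<Longrightarrow> distr M borel (\<xi> i i) = distr M borel (\<xi> 1 1)"
    and off_id: "\<And>i j. 1 \<le> i \<Longrightarrow> i < j \<Longrightarrow> distr M borel (\<xi> i j) = distr M borel (\<xi> 1 2)"
    and mean0: "\<And>i j. 1 \<le> i \<Longrightarrow> i \<le> j \<Longrightarrow> integral\<^sup>L M (\<xi> i j) = 0"
    and moments_diag: "\<And>p::nat. integrable M (\<lambda>x. \<bar>\<xi> 1 1 x\<bar> ^ p)"
    and moments_off: "\<And>p::nat. integrable M (\<lambda>x. \<bar>\<xi> 1 2 x\<bar> ^ p)"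
begin

definition moment :: "nat \<times> nat \<Rightarrow> nat \<Rightarrow> real" where
  "moment e n = (if fst e = snd e then integral\<^sup>L M (\<lambda>x. \<xi> 1 1 x ^ n) else integral\<^sup>L M (\<lambda>x. \<xi> 1 2 x ^ n))"

lemma moment_1: "moment e 1 = 0"
  using mean0[of 1 1] mean0[of 1 2] by (simp add: moment_def)

lemma loop_determined_moment: "loop_determined moment"
  unfolding loop_determined_def moment_def by auto

lemma entry_power:
  assumes "1 \<le> i" "i \<le> j"
  shows "integrable M (\<lambda>x. \<xi> i j x ^ n)" "integral\<^sup>L M (\<lambda>x. \<xi> i j x ^ n) = moment (i, j) n"
proof -
  have int11: "integrable M (\<lambda>x. \<xi> 1 1 x ^ n)" and int12: "integrable M (\<lambda>x. \<xi> 1 2 x ^ n)"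
    using integrable_power_of_abs[OF meas[of 1 1] moments_diag]
      integrable_power_of_abs[OF meas[of 1 2] moments_off] by simp_all
  have "integrable M (\<lambda>x. \<xi> i j x ^ n) \<and> integral\<^sup>L M (\<lambda>x. \<xi> i j x ^ n) = moment (i, j) n"
  proof (cases "i = j")
    case True
    then have "distr M borel (\<xi> i j) = distr M borel (\<xi> 1 1)"
      using diag_id[OF assms(1)] by simp
    then show ?thesis
      using same_distribution_power[OF meas[OF assms] meas[of 1 1] _ int11] True
      by (simp add: moment_def)
  next
    case False
    then have "distr M borel (\<xi> i j) = distr M borel (\<xi> 1 2)"
      using off_id[OF assms(1)] assms(2) by simp
    then show ?thesis
      using same_distribution_power[OF meas[OF assms] meas[of 1 2] _ int12] False
      by (simp add: moment_def)
  qed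
  then show "integrable M (\<lambda>x. \<xi> i j x ^ n)" "integral\<^sup>L M (\<lambda>x. \<xi> i j x ^ n) = moment (i, j) n"
    by auto
qed

lemma integral_edge_product:
  assumes "finite S" "S \<subseteq> {p. 1 \<le> fst p \<and> fst p \<le> snd p}"
  shows "integrable M (\<lambda>x. \<Prod>e\<in>S. \<xi> (fst e) (snd e) x ^ c e)"
    and "integral\<^sup>L M (\<lambda>x. \<Prod>e\<in>S. \<xi> (fst e) (snd e) x ^ c e) = (\<Prod>e\<in>S. moment e (c e))"
proof -
  have indep_S: "indep_vars (\<lambda>_. borel) (\<lambda>e x. \<xi> (fst e) (snd e) x ^ c e) S"
    using indep_vars_subset[OF indep assms(2)]
    by (rule indep_vars_compose2[where Y = "\<lambda>e t. t ^ c e" and N = "\<lambda>_. borel"]) simp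
  have entry: "integrable M (\<lambda>x. \<xi> (fst e) (snd e) x ^ c e)"
      "integral\<^sup>L M (\<lambda>x. \<xi> (fst e) (snd e) x ^ c e) = moment e (c e)" if "e \<in> S" for e
    using that assms(2) entry_power[of "fst e" "snd e"] by auto
  show "integrable M (\<lambda>x. \<Prod>e\<in>S. \<xi> (fst e) (snd e) x ^ c e)"
    by (rule indep_vars_integrable[OF assms(1) indep_S entry(1)])
  show "integral\<^sup>L M (\<lambda>x. \<Prod>e\<in>S. \<xi> (fst e) (snd e) x ^ c e) = (\<Prod>e\<in>S. moment e (c e))"
    using indep_vars_lebesgue_integral[OF assms(1) indep_S entry(1)] entry(2) by simp
qed

lemma integral_T_word:
  assumes "\<forall>x\<in>set w. 1 \<le> x"
  shows "integrable M (T_word \<xi> w)" "integral\<^sup>L M (T_word \<xi> w) = word_moment moment w"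
  using integral_edge_product[OF finite_word_edges word_edges_upper[OF assms]]
  by (simp_all add: T_word_def[abs_def] word_moment_def)

lemma covariance_eq_pair_cov:
  assumes "a \<in> V_pairs k"
  shows "integrable M (\<lambda>x. Tbar_word M \<xi> (fst a) x * Tbar_word M \<xi> (snd a) x)"
    and "integral\<^sup>L M (\<lambda>x. Tbar_word M \<xi> (fst a) x * Tbar_word M \<xi> (snd a) x) = pair_cov moment a"
proof -
  define U V where "U = T_word \<xi> (fst a)" and "V = T_word \<xi> (snd a)"
  define EU EV where "EU = integral\<^sup>L M U" and "EV = integral\<^sup>L M V"
  have positive: "\<forall>x\<in>set (fst a). 1 \<le> x" "\<forall>x\<in>set (snd a). 1 \<le> x"
    using assms by (simp_all add: V_pairs_def V_words_def)
  have int_U: "integrable M U" and EU: "EU = word_moment moment (fst a)"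
    using integral_T_word[OF positive(1)] by (simp_all add: U_def EU_def)
  have int_V: "integrable M V" and EV: "EV = word_moment moment (snd a)"
    using integral_T_word[OF positive(2)] by (simp_all add: V_def EV_def)
  have "pair_edges a \<subseteq> {p. 1 \<le> fst p \<and> fst p \<le> snd p}"
    using word_edges_upper[OF positive(1)] word_edges_upper[OF positive(2)] by (auto simp: pair_edges_def)
  then have int_UV: "integrable M (\<lambda>x. U x * V x)"
    and EUV: "integral\<^sup>L M (\<lambda>x. U x * V x) = (\<Prod>e\<in>pair_edges a. moment e (pair_count a e))"
    using integral_edge_product[of "pair_edges a" "pair_count a"]
    by (simp_all add: U_def V_def T_word_pair pair_edges_def)
  have cov: "(\<lambda>x. Tbar_word M \<xi> (fst a) x * Tbar_word M \<xi> (snd a) x)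
      = (\<lambda>x. (U x * V x - EV * U x) - (EU * V x - EU * EV))"
    by (rule ext) (simp add: Tbar_word_def U_def V_def EU_def EV_def algebra_simps)
  have int1: "integrable M (\<lambda>x. U x * V x - EV * U x)" and int2: "integrable M (\<lambda>x. EU * V x - EU * EV)"
    using int_UV int_U int_V by auto
  then show "integrable M (\<lambda>x. Tbar_word M \<xi> (fst a) x * Tbar_word M \<xi> (snd a) x)"
    unfolding cov by auto
  have "integral\<^sup>L M (\<lambda>x. (U x * V x - EV * U x) - (EU * V x - EU * EV))
      = (integral\<^sup>L M (\<lambda>x. U x * V x) - EV * EU) - (EU * EV - EU * EV)"
    using int_UV int_U int_V by (simp add: Bochner_Integration.integral_diff[OF int1 int2] EU_def EV_def prob_space)
  then show "integral\<^sup>L M (\<lambda>x. Tbar_word M \<xi> (fst a) x * Tbar_word M \<xi> (snd a) x) = pair_cov moment a"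
    unfolding cov EUV pair_cov_def EU EV by simp
qed

lemma second_moment_formula:
  assumes N: "1 \<le> N" and k: "1 \<le> k"
  shows "integral\<^sup>L M (\<lambda>x. (Z_var M \<xi> N k x)\<^sup>2)
       = (\<Sum>c\<in>canon_pairs k. pair_cov moment c * (real (card (labellings N (pair_wt c))) / real N ^ (k - 1)))"
proof -
  define p where "p = real N powr (- (real k - 1) / 2)"
  have p2: "p\<^sup>2 = 1 / real N ^ (k - 1)"
  proof -
    have "p\<^sup>2 = real N powr (of_nat 2 * (- (real k - 1) / 2))"
      unfolding p_def by (rule powr_power) (use N in simp)
    also have "of_nat 2 * (- (real k - 1) / 2) = - real (k - 1)"
      using k by (simp add: of_nat_diff)
    finally show ?thesis
      using N by (simp add: powr_minus powr_realpow divide_inverse)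
  qed
  have square: "(Z_var M \<xi> N k x)\<^sup>2
      = p\<^sup>2 * (\<Sum>a\<in>V_pairs_N N k. Tbar_word M \<xi> (fst a) x * Tbar_word M \<xi> (snd a) x)" for x
  proof -
    have "(\<Sum>w\<in>V_words_N N k. Tbar_word M \<xi> w x)\<^sup>2
        = (\<Sum>a\<in>V_words_N N k \<times> V_words_N N k. Tbar_word M \<xi> (fst a) x * Tbar_word M \<xi> (snd a) x)"
      unfolding power2_eq_square sum_product sum.cartesian_product by (simp add: case_prod_beta)
    then show ?thesis
      unfolding Z_var_def p_def V_pairs_N_eq by (simp add: power_mult_distrib)
  qed
  have "integral\<^sup>L M (\<lambda>x. (Z_var M \<xi> N k x)\<^sup>2)
      = p\<^sup>2 * integral\<^sup>L M (\<lambda>x. \<Sum>a\<in>V_pairs_N N k. Tbar_word M \<xi> (fst a) x * Tbar_word M \<xi> (snd a) x)"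
    unfolding square by (rule integral_mult_right_zero)
  also have "integral\<^sup>L M (\<lambda>x. \<Sum>a\<in>V_pairs_N N k. Tbar_word M \<xi> (fst a) x * Tbar_word M \<xi> (snd a) x)
      = (\<Sum>a\<in>V_pairs_N N k. pair_cov moment a)"
    using covariance_eq_pair_cov
    by (subst Bochner_Integration.integral_sum) (auto simp: V_pairs_N_def intro!: sum.cong)
  also have "\<dots> = (\<Sum>c\<in>canon_pairs k. pair_cov moment c * real (card (labellings N (pair_wt c))))"
    by (rule sum_over_classes)
      (simp add: canon_def pair_cov_relabel[OF inj_on_rank loop_determined_moment])
  finally show ?thesis
    unfolding p2 by (simp add: sum_distrib_left)
qed

lemma limit_sum_eq: "limit_sum M \<xi> k = (\<Sum>c\<in>canon ` CLT_pairs k. pair_cov moment c)"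
  unfolding limit_sum_def Let_def
proof (rule sum_CLT_classes)
  fix a assume "a \<in> CLT_pairs k"
  then have "a \<in> V_pairs k"
    by (simp add: CLT_pairs_iff)
  then show "integral\<^sup>L M (\<lambda>x. Tbar_word M \<xi> (fst a) x * Tbar_word M \<xi> (snd a) x) = pair_cov moment (canon a)"
    by (simp add: covariance_eq_pair_cov(2) canon_def pair_cov_relabel[OF inj_on_rank loop_determined_moment])
qed

lemma second_moment_limit:
  assumes "1 \<le> k"
  shows "(\<lambda>N. integral\<^sup>L M (\<lambda>x. (Z_var M \<xi> N k x)\<^sup>2)) \<longlonglongrightarrow> limit_sum M \<xi> k"
proof -
  have "\<forall>\<^sub>F N in sequentially. (\<Sum>c\<in>canon_pairs k. pair_cov moment c
      * (real (card (labellings N (pair_wt c))) / real N ^ (k - 1))) = integral\<^sup>L M (\<lambda>x. (Z_var M \<xi> N k x)\<^sup>2)"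
    unfolding eventually_sequentially using second_moment_formula[OF _ assms] by (intro exI[of _ 1]) auto
  from Lim_transform_eventually[OF class_sum_limit[of moment, OF moment_1] this] show ?thesis
    by (simp add: limit_sum_eq)
qed

end

theorem mainTheorem15:
  fixes M :: "'a measure" and \<xi> :: "nat \<Rightarrow> nat \<Rightarrow> 'a \<Rightarrow> real" and k :: nat
  assumes "prob_space M"
    and meas: "\<And>i j. 1 \<le> i \<Longrightarrow> i \<le> j \<Longrightarrow> \<xi> i j \<in> borel_measurable M"
    and indep: "prob_space.indep_vars M (\<lambda>_. borel) (\<lambda>p. \<xi> (fst p) (snd p)) {p. 1 \<le> fst p \<and> fst p \<le> snd p}"
    and diag_id: "\<And>i. 1 \<le> i \<Longrightarrow> distr M borel (\<xi> i i) = distr M borel (\<xi> 1 1)"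
    and off_id: "\<And>i j. 1 \<le> i \<Longrightarrow> i < j \<Longrightarrow> distr M borel (\<xi> i j) = distr M borel (\<xi> 1 2)"
    and mean0: "\<And>i j. 1 \<le> i \<Longrightarrow> i \<le> j \<Longrightarrow> integral\<^sup>L M (\<xi> i j) = 0"
    and moments_diag: "\<And>p::nat. integrable M (\<lambda>x. \<bar>\<xi> 1 1 x\<bar> ^ p)"
    and moments_off: "\<And>p::nat. integrable M (\<lambda>x. \<bar>\<xi> 1 2 x\<bar> ^ p)"
    and var1: "integral\<^sup>L M (\<lambda>x. (\<xi> 1 2 x)\<^sup>2) = 1"
    and "k \<ge> 1"
  shows "(\<lambda>N. integral\<^sup>L M (\<lambda>x. (Z_var M \<xi> N k x)\<^sup>2)) \<longlonglongrightarrow> limit_sum M \<xi> k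
         \<and> (even k \<longrightarrow> limit_sum M \<xi> k = 0)"
proof -
  interpret wigner_entries M \<xi>
    by (intro wigner_entries.intro wigner_entries_axioms.intro assms(1))
      (fact meas indep diag_id off_id mean0 moments_diag moments_off)+
  have "even k \<Longrightarrow> limit_sum M \<xi> k = 0"
    unfolding limit_sum_def by (simp add: CLT_pairs_even)
  then show ?thesis
    using second_moment_limit[OF \<open>k \<ge> 1\<close>] by blast
qed

end
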